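(* If some set maximizing $\overline{re}$ over nonempty subsets of $\mathbb{S}$ has cardinality $k^*\ge3$, then $\{1,2,\dots,k^*\}$ maximizes $\overline{re}$ over nonempty subsets of $\mathbb{S}$ (no assumption on the size of the equilibrium demands is needed).
   Context: Market model: sellers $\mathbb{S}=\{1,\dots,n\}$, product qualities $\theta_1\ge\dots\ge\theta_n\ge0$. For displayed set $S$ and prices $p_i\ge0$: $a_i=e^{\theta_i-p_i}$, MNL demand $q_i=a_i/(1+\sum_{j\in S}a_j)$; sellers in $S$ play the Bertrand game (seller $i$ chooses $p_i\ge0$ to maximize $p_iq_i$). $V:(0,\infty)\to(0,1)$: $V(x)=$ the unique $v\in(0,1)$ with $v\exp(v/(1-v))=x$. For nonempty $S$, $\bar q_0(S)\in(0,1)$ is the unique solution of $\sum_{i\in S}V(\bar q_0e^{\theta_i-1})=1-\bar q_0$, $\bar q_i(S)=V(\bar q_0(S)e^{\theta_i-1})$, and $\overline{re}(S)=\sum_{i\in S}\frac{\bar q_i(S)}{1-\bar q_i(S)}$. *)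

theory Defs
  imports Complex_Main
begin

definition Vfun :: "real \<Rightarrow> real" where
  "Vfun x = (THE v. 0 < v \<and> v < 1 \<and> v * exp (v / (1 - v)) = x)"

text \<open>Equilibrium no-purchase share of displayed set S, for qualities theta.\<close>
definition q0bar :: "(nat \<Rightarrow> real) \<Rightarrow> nat set \<Rightarrow> real" where
  "q0bar theta S = (THE q. 0 < q \<and> q < 1 \<and>
       (\<Sum>i\<in>S. Vfun (q * exp (theta i - 1))) = 1 - q)"

definition qbar :: "(nat \<Rightarrow> real) \<Rightarrow> nat set \<Rightarrow> nat \<Rightarrow> real" where
  "qbar theta S i = Vfun (q0bar theta S * exp (theta i - 1))"

definition rebar :: "(nat \<Rightarrow> real) \<Rightarrow> nat set \<Rightarrow> real" where
  "rebar theta S = (\<Sum>i\<in>S. qbar theta S i / (1 - qbar theta S i))"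

definition is_rebar_max :: "nat \<Rightarrow> (nat \<Rightarrow> real) \<Rightarrow> nat set \<Rightarrow> bool" where
  "is_rebar_max n theta S \<longleftrightarrow> S \<subseteq> {1..n} \<and> S \<noteq> {} \<and>
     (\<forall>T. T \<subseteq> {1..n} \<and> T \<noteq> {} \<longrightarrow> rebar theta T \<le> rebar theta S)"

end

theory Submission
  imports Defs
begin

text \<open>Write \<open>q0bar = exp L\<close>. Every seller's equilibrium odds \<open>qbar / (1 - qbar)\<close> is
  \<open>odds (L + theta i - 1)\<close> for one increasing function \<open>odds\<close>, the equilibrium \<open>L\<close> of a set
  is the root of \<open>exp L + \<Sum> share (odds \<dots>) = 1\<close>, and \<open>rebar\<close> is the sum of the odds.
  For a fixed set \<open>T\<close> the revenue of every extension \<open>insert x T\<close> and that of \<open>T\<close> itself are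
  values of one function of \<open>L\<close>, whose derivative has the sign of a function that is increasing
  at each of its zeros; so this function never falls after it has risen. A better seller
  yields a smaller equilibrium \<open>L\<close>, and optimality of \<open>S\<close> says that dropping a member \<open>j\<close>
  does not help; together these show that exchanging \<open>j\<close> for any better outsider keeps \<open>S\<close>
  optimal. Exchanging members outside \<open>{1..card S}\<close> one at a time gives the theorem.\<close>

definition share :: "real \<Rightarrow> real" where
  "share r = r / (1 + r)"

definition odds_log :: "real \<Rightarrow> real" where
  "odds_log r = ln r + r - ln (1 + r)"

text \<open>With \<open>r = v / (1 - v)\<close> the equation \<open>v * exp (v / (1 - v)) = exp y\<close> becomes
  \<open>odds_log r = y\<close>, so \<open>Vfun (exp y) = share (odds y)\<close> and \<open>odds\<close> returns the odds
  \<open>q / (1 - q)\<close> of an equilibrium share \<open>q\<close>.\<close>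
definition odds :: "real \<Rightarrow> real" where
  "odds y = (THE r. 0 < r \<and> odds_log r = y)"

definition odds_slope :: "real \<Rightarrow> real" where
  "odds_slope r = r * (1 + r) / (1 + r + r\<^sup>2)"

lemma share_pos: "0 < r \<Longrightarrow> 0 < share r"
  unfolding share_def by simp

lemma share_le: "0 < r \<Longrightarrow> share r \<le> r"
  unfolding share_def by (simp add: field_simps)

lemma share_strict_mono: "0 < a \<Longrightarrow> a < b \<Longrightarrow> share a < share b"
  unfolding share_def by (simp add: field_simps)

lemma share_mono: "0 < a \<Longrightarrow> a \<le> b \<Longrightarrow> share a \<le> share b"
  unfolding share_def by (simp add: field_simps)

lemma one_minus_share: "0 < r \<Longrightarrow> 1 - share r = 1 / (1 + r)"
  unfolding share_def by (simp add: field_simps)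

lemma odds_over_share: "0 < r \<Longrightarrow> share r / (1 - share r) = r"
  unfolding share_def by (simp add: field_simps)

lemma DERIV_odds_log:
  assumes "0 < r" shows "(odds_log has_real_derivative 1 / r + 1 - 1 / (1 + r)) (at r)"
  unfolding odds_log_def[abs_def] using assms
  by (auto intro!: derivative_eq_intros simp: divide_inverse)

lemma odds_log_deriv_pos:
  fixes r :: real assumes "0 < r" shows "0 < 1 / r + 1 - 1 / (1 + r)"
proof -
  have "1 / (1 + r) < 1" using assms by simp
  moreover have "0 < 1 / r" using assms by simp
  ultimately show ?thesis by linarith
qed

lemma isCont_odds_log: "0 < r \<Longrightarrow> isCont odds_log r"
  using DERIV_odds_log DERIV_isCont by blast

lemma odds_log_strict_mono:
  assumes "0 < a" "a < b" shows "odds_log a < odds_log b"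
proof (rule DERIV_pos_imp_increasing[OF assms(2)])
  fix x assume "a \<le> x"
  with assms have "0 < x" by simp
  then show "\<exists>y. DERIV odds_log x :> y \<and> 0 < y"
    using DERIV_odds_log odds_log_deriv_pos by blast
qed

lemma odds_log_inj: "0 < a \<Longrightarrow> 0 < b \<Longrightarrow> odds_log a = odds_log b \<Longrightarrow> a = b"
  by (metis linorder_neq_iff odds_log_strict_mono order_less_irrefl)

lemma odds_log_surj: "\<exists>r>0. odds_log r = y"
proof -
  define r1 where "r1 = min 1 (exp (y - 1))"
  define r2 where "r2 = exp y"
  have r1: "0 < r1" "r1 \<le> 1" "r1 \<le> exp (y - 1)"
    unfolding r1_def by auto
  then have "ln r1 \<le> y - 1"
    by (metis ln_exp ln_le_cancel_iff exp_gt_zero)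
  have lo: "odds_log r1 \<le> y"
    using r1 \<open>ln r1 \<le> y - 1\<close> ln_ge_zero[of "1 + r1"] unfolding odds_log_def by linarith
  have hi: "y \<le> odds_log r2"
    using ln_add_one_self_le_self[of r2] unfolding odds_log_def r2_def by simp
  have "r1 \<le> r2"
    using odds_log_strict_mono[of r2 r1] lo hi unfolding r2_def by force
  moreover have "\<forall>x. r1 \<le> x \<and> x \<le> r2 \<longrightarrow> isCont odds_log x"
    using r1 isCont_odds_log by force
  ultimately obtain r where "r1 \<le> r" "odds_log r = y"
    using IVT[of odds_log r1 y r2] lo hi by blast
  then show ?thesis using r1 by (intro exI[of _ r]) auto
qed

lemma odds_pos: "0 < odds y" and odds_log_odds: "odds_log (odds y) = y"
proof -
  obtain r where "0 < r" "odds_log r = y" using odds_log_surj by blast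
  then have "\<exists>!r. 0 < r \<and> odds_log r = y" using odds_log_inj by blast
  then have "0 < odds y \<and> odds_log (odds y) = y" unfolding odds_def by (rule theI')
  then show "0 < odds y" "odds_log (odds y) = y" by auto
qed

lemma odds_odds_log: "0 < r \<Longrightarrow> odds (odds_log r) = r"
  using odds_log_inj odds_log_odds odds_pos by blast

lemma odds_strict_mono: "y1 < y2 \<Longrightarrow> odds y1 < odds y2"
  by (metis odds_log_odds odds_log_strict_mono odds_pos order.asym linorder_neqE)

lemma odds_mono: "y1 \<le> y2 \<Longrightarrow> odds y1 \<le> odds y2"
  by (metis odds_strict_mono order_le_less)

lemma odds_le_exp: "odds y \<le> exp y"
proof -
  have "ln (odds y) \<le> y"
    using ln_add_one_self_le_self[OF less_imp_le[OF odds_pos[of y]]] odds_log_odds[of y]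
    unfolding odds_log_def by linarith
  then show ?thesis using odds_pos[of y] by (metis exp_le_cancel_iff exp_ln)
qed

lemma isCont_odds: "isCont odds y"
proof -
  have "isCont odds (odds_log (odds y))"
    by (rule isCont_inverse_function2[where a="odds y / 2" and b="odds y + 1"])
       (use odds_pos[of y] in \<open>auto intro!: odds_odds_log isCont_odds_log\<close>)
  then show ?thesis by (simp add: odds_log_odds)
qed

lemma DERIV_odds: "(odds has_real_derivative odds_slope (odds y)) (at y)"
proof -
  let ?r = "odds y"
  have "(odds has_real_derivative inverse (1 / ?r + 1 - 1 / (1 + ?r))) (at y)"
    by (rule DERIV_inverse_function[where f=odds_log and a="y - 1" and b="y + 1"])
       (use odds_pos[of y] odds_log_deriv_pos[of ?r] in
         \<open>auto intro!: DERIV_odds_log isCont_odds simp: odds_log_odds\<close>)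
  moreover have "inverse (1 / ?r + 1 - 1 / (1 + ?r)) = odds_slope ?r"
    using odds_pos[of y] unfolding odds_slope_def by (simp add: field_simps power2_eq_square)
  ultimately show ?thesis by simp
qed

lemma Vfun_exp: "Vfun (exp y) = share (odds y)"
  unfolding Vfun_def
proof (rule the_equality)
  have exp_odds_log: "exp (odds_log r) = share r * exp r" if "0 < r" for r
    using that unfolding odds_log_def share_def by (simp add: exp_diff exp_add)
  let ?u = "odds y"
  have u: "0 < ?u" by (rule odds_pos)
  have "share ?u * exp (share ?u / (1 - share ?u)) = exp y"
    using exp_odds_log[OF u] odds_log_odds[of y] by (simp only: odds_over_share[OF u])
  moreover have "0 < share ?u" "share ?u < 1" using u unfolding share_def by auto
  ultimately show "0 < share ?u \<and> share ?u < 1 \<and> share ?u * exp (share ?u / (1 - share ?u)) = exp y"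
    by blast
  fix v assume v: "0 < v \<and> v < 1 \<and> v * exp (v / (1 - v)) = exp y"
  define r where "r = v / (1 - v)"
  have r: "0 < r" and vr: "v = share r"
    unfolding r_def share_def using v by (auto simp: field_simps)
  have "exp (odds_log r) = share r * exp r" by (rule exp_odds_log[OF r])
  also have "\<dots> = v * exp (v / (1 - v))" by (simp only: vr[symmetric]) (simp only: r_def)
  finally have "exp (odds_log r) = exp y" using v by simp
  then have "r = ?u" using odds_odds_log[OF r] by simp
  then show "v = share ?u" using vr by simp
qed

definition seller_odds :: "(nat \<Rightarrow> real) \<Rightarrow> nat \<Rightarrow> real \<Rightarrow> real" where
  "seller_odds theta i L = odds (L + theta i - 1)"

definition total_share :: "(nat \<Rightarrow> real) \<Rightarrow> nat set \<Rightarrow> real \<Rightarrow> real" where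
  "total_share theta T L = exp L + (\<Sum>i\<in>T. share (seller_odds theta i L))"

lemma seller_odds_pos: "0 < seller_odds theta i L"
  unfolding seller_odds_def by (rule odds_pos)

lemma seller_odds_strict_mono: "L1 + theta i < L2 + theta j \<Longrightarrow> seller_odds theta i L1 < seller_odds theta j L2"
  unfolding seller_odds_def by (rule odds_strict_mono) simp

lemma seller_odds_mono: "L1 \<le> L2 \<Longrightarrow> seller_odds theta i L1 \<le> seller_odds theta i L2"
  unfolding seller_odds_def by (rule odds_mono) simp

lemma Vfun_seller_odds: "Vfun (exp L * exp (theta i - 1)) = share (seller_odds theta i L)"
  unfolding seller_odds_def Vfun_exp[symmetric] by (simp add: mult_exp_exp add_diff_eq)

lemma total_share_pos: "0 < total_share theta T L"
  unfolding total_share_def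
  by (simp add: add_pos_nonneg sum_nonneg share_pos seller_odds_pos less_imp_le)

lemma total_share_insert:
  "finite T \<Longrightarrow> x \<notin> T \<Longrightarrow> total_share theta (insert x T) L = total_share theta T L + share (seller_odds theta x L)"
  unfolding total_share_def by simp

lemma total_share_strict_mono:
  assumes "finite T" "L1 < L2" shows "total_share theta T L1 < total_share theta T L2"
proof -
  have "(\<Sum>i\<in>T. share (seller_odds theta i L1)) \<le> (\<Sum>i\<in>T. share (seller_odds theta i L2))"
    using assms by (intro sum_mono share_mono seller_odds_pos seller_odds_mono) simp
  moreover have "exp L1 < exp L2" using assms by simp
  ultimately show ?thesis unfolding total_share_def by linarith
qed

lemma total_share_mono: "finite T \<Longrightarrow> L1 \<le> L2 \<Longrightarrow> total_share theta T L1 \<le> total_share theta T L2"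
  by (metis order_le_less total_share_strict_mono)

lemma total_share_eq_one_unique:
  "finite T \<Longrightarrow> total_share theta T L1 = 1 \<Longrightarrow> total_share theta T L2 = 1 \<Longrightarrow> L1 = L2"
  by (metis linorder_neqE order_less_irrefl total_share_strict_mono)

lemma isCont_seller_odds: "isCont (seller_odds theta i) L"
  unfolding seller_odds_def[abs_def] by (intro continuous_intros isCont_o2[OF _ isCont_odds])

lemma isCont_total_share: "isCont (total_share theta T) L"
  unfolding total_share_def[abs_def] share_def
  using seller_odds_pos[THEN add_pos_pos[OF zero_less_one]]
  by (intro continuous_intros isCont_seller_odds) (simp add: less_imp_neq[symmetric])

lemma total_share_eq_one: assumes "finite T" obtains L where "total_share theta T L = 1"
proof -
  define L1 where "L1 = - ln (1 + (\<Sum>i\<in>T. exp (theta i - 1)))"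
  have pos: "0 < 1 + (\<Sum>i\<in>T. exp (theta i - 1))" by (simp add: add_pos_nonneg sum_nonneg)
  have L1: "L1 \<le> 0" and eL1: "exp L1 * (1 + (\<Sum>i\<in>T. exp (theta i - 1))) = 1"
    unfolding L1_def using pos by (simp_all add: sum_nonneg exp_minus field_simps)
  have "(\<Sum>i\<in>T. share (seller_odds theta i L1)) \<le> (\<Sum>i\<in>T. exp L1 * exp (theta i - 1))"
  proof (rule sum_mono)
    fix i
    have "share (seller_odds theta i L1) \<le> seller_odds theta i L1" by (rule share_le[OF seller_odds_pos])
    also have "\<dots> \<le> exp L1 * exp (theta i - 1)"
      unfolding seller_odds_def mult_exp_exp add_diff_eq by (rule odds_le_exp)
    finally show "share (seller_odds theta i L1) \<le> exp L1 * exp (theta i - 1)" .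
  qed
  then have "total_share theta T L1 \<le> 1"
    using eL1 unfolding total_share_def by (simp add: sum_distrib_left distrib_left)
  moreover have "1 \<le> total_share theta T 0"
    unfolding total_share_def by (simp add: sum_nonneg share_pos seller_odds_pos less_imp_le)
  ultimately have "\<exists>L. L1 \<le> L \<and> L \<le> 0 \<and> total_share theta T L = 1"
    using L1 by (intro IVT) (auto simp: isCont_total_share)
  then show ?thesis using that by blast
qed

lemma rebar_eq_sum_seller_odds:
  assumes T: "finite T" "T \<noteq> {}" and L: "total_share theta T L = 1"
  shows "rebar theta T = (\<Sum>i\<in>T. seller_odds theta i L)"
proof -
  have sum_Vfun: "(\<Sum>i\<in>T. Vfun (q * exp (theta i - 1))) = total_share theta T (ln q) - q"
    if "0 < q" for q
    using that unfolding total_share_def by (simp add: Vfun_seller_odds[of "ln q", symmetric])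
  have "0 < (\<Sum>i\<in>T. share (seller_odds theta i L))"
    using T by (intro sum_pos share_pos seller_odds_pos) auto
  then have "exp L < 1" using L unfolding total_share_def by linarith
  then have q0: "q0bar theta T = exp L"
    unfolding q0bar_def
  proof (intro the_equality conjI)
    show "(\<Sum>i\<in>T. Vfun (exp L * exp (theta i - 1))) = 1 - exp L"
      using sum_Vfun[of "exp L"] L by simp
  next
    fix q assume q: "0 < q \<and> q < 1 \<and> (\<Sum>i\<in>T. Vfun (q * exp (theta i - 1))) = 1 - q"
    then have "total_share theta T (ln q) = 1" using sum_Vfun[of q] by simp
    then have "ln q = L" using total_share_eq_one_unique[OF T(1) _ L] by blast
    then show "q = exp L" using q by auto
  qed simp_all
  then show ?thesis
    unfolding rebar_def qbar_def q0 Vfun_seller_odds by (simp add: odds_over_share seller_odds_pos)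
qed

definition odds_slope_deriv :: "real \<Rightarrow> real" where
  "odds_slope_deriv r = (1 + 2 * r) / (1 + r + r\<^sup>2)\<^sup>2"

definition share_slope :: "real \<Rightarrow> real" where
  "share_slope r = r / ((1 + r) * (1 + r + r\<^sup>2))"

definition share_slope_deriv :: "real \<Rightarrow> real" where
  "share_slope_deriv r = (1 - 2 * r\<^sup>2 - 2 * r ^ 3) / ((1 + r)\<^sup>2 * (1 + r + r\<^sup>2)\<^sup>2)"

lemma DERIV_odds_slope:
  assumes "0 < r" shows "(odds_slope has_real_derivative odds_slope_deriv r) (at r)"
proof -
  have d: "0 < 1 + r + r\<^sup>2" using assms by (simp add: add_pos_nonneg)
  have "(odds_slope has_real_derivative
     ((1 * (1 + r) + r * 1) * (1 + r + r\<^sup>2) - r * (1 + r) * (1 + 2 * r)) / (1 + r + r\<^sup>2)\<^sup>2) (at r)"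
    unfolding odds_slope_def[abs_def] using d
    by (auto intro!: derivative_eq_intros simp: power2_eq_square)
  moreover have "((1 * (1 + r) + r * 1) * (1 + r + r\<^sup>2) - r * (1 + r) * (1 + 2 * r)) / (1 + r + r\<^sup>2)\<^sup>2
      = odds_slope_deriv r"
    unfolding odds_slope_deriv_def by (simp add: algebra_simps power2_eq_square)
  ultimately show ?thesis by simp
qed

lemma DERIV_share_slope:
  assumes "0 < r" shows "(share_slope has_real_derivative share_slope_deriv r) (at r)"
proof -
  have d: "0 < 1 + r + r\<^sup>2" "0 < 1 + r" using assms by (simp_all add: add_pos_nonneg)
  have "(share_slope has_real_derivative
     (1 * ((1 + r) * (1 + r + r\<^sup>2)) - r * (1 * (1 + r + r\<^sup>2) + (1 + r) * (1 + 2 * r)))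
       / ((1 + r) * (1 + r + r\<^sup>2))\<^sup>2) (at r)"
    unfolding share_slope_def[abs_def] using d
    by (auto intro!: derivative_eq_intros simp: power2_eq_square)
  moreover have "(1 * ((1 + r) * (1 + r + r\<^sup>2)) - r * (1 * (1 + r + r\<^sup>2) + (1 + r) * (1 + 2 * r)))
       / ((1 + r) * (1 + r + r\<^sup>2))\<^sup>2 = share_slope_deriv r"
    unfolding share_slope_deriv_def by (simp add: algebra_simps power2_eq_square power3_eq_cube)
  ultimately show ?thesis by simp
qed

lemma DERIV_share: "0 < r \<Longrightarrow> (share has_real_derivative 1 / (1 + r)\<^sup>2) (at r)"
  unfolding share_def[abs_def]
  by (auto intro!: derivative_eq_intros simp: power2_eq_square)

lemma share_slope_eq: "0 < r \<Longrightarrow> share_slope r = 1 / (1 + r)\<^sup>2 * odds_slope r"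
  unfolding share_slope_def odds_slope_def
  by (simp add: divide_simps power2_eq_square add_pos_nonneg)

lemma DERIV_seller_odds:
  "(seller_odds theta i has_real_derivative odds_slope (seller_odds theta i L)) (at L)"
proof -
  have "((\<lambda>L. L + theta i - 1) has_real_derivative 1) (at L)"
    by (auto intro!: derivative_eq_intros)
  from DERIV_chain2[OF DERIV_odds this] show ?thesis
    unfolding seller_odds_def[abs_def] by simp
qed

lemma DERIV_comp_seller_odds:
  assumes "\<And>r. 0 < r \<Longrightarrow> (f has_real_derivative f' r) (at r)"
  shows "((\<lambda>L. f (seller_odds theta i L)) has_real_derivative
      f' (seller_odds theta i L) * odds_slope (seller_odds theta i L)) (at L)"
  by (rule DERIV_chain2[OF assms[OF seller_odds_pos] DERIV_seller_odds])

definition odds_sum :: "(nat \<Rightarrow> real) \<Rightarrow> nat set \<Rightarrow> real \<Rightarrow> real" where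
  "odds_sum theta T L = (\<Sum>i\<in>T. seller_odds theta i L)"

definition odds_sum_deriv :: "(nat \<Rightarrow> real) \<Rightarrow> nat set \<Rightarrow> real \<Rightarrow> real" where
  "odds_sum_deriv theta T L = (\<Sum>i\<in>T. odds_slope (seller_odds theta i L))"

definition odds_sum_deriv2 :: "(nat \<Rightarrow> real) \<Rightarrow> nat set \<Rightarrow> real \<Rightarrow> real" where
  "odds_sum_deriv2 theta T L =
     (\<Sum>i\<in>T. odds_slope_deriv (seller_odds theta i L) * odds_slope (seller_odds theta i L))"

definition total_share_deriv :: "(nat \<Rightarrow> real) \<Rightarrow> nat set \<Rightarrow> real \<Rightarrow> real" where
  "total_share_deriv theta T L = exp L + (\<Sum>i\<in>T. share_slope (seller_odds theta i L))"

definition total_share_deriv2 :: "(nat \<Rightarrow> real) \<Rightarrow> nat set \<Rightarrow> real \<Rightarrow> real" where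
  "total_share_deriv2 theta T L =
     exp L + (\<Sum>i\<in>T. share_slope_deriv (seller_odds theta i L) * odds_slope (seller_odds theta i L))"

lemma DERIV_odds_sum: "(odds_sum theta T has_real_derivative odds_sum_deriv theta T L) (at L)"
  unfolding odds_sum_def[abs_def] odds_sum_deriv_def by (intro DERIV_sum DERIV_seller_odds)

lemma DERIV_odds_sum_deriv:
  "(odds_sum_deriv theta T has_real_derivative odds_sum_deriv2 theta T L) (at L)"
  unfolding odds_sum_deriv_def[abs_def] odds_sum_deriv2_def
  by (intro DERIV_sum DERIV_comp_seller_odds DERIV_odds_slope)

lemma DERIV_total_share:
  "(total_share theta T has_real_derivative total_share_deriv theta T L) (at L)"
proof -
  have "(total_share theta T has_real_derivative exp L + (\<Sum>i\<in>T.
      1 / (1 + seller_odds theta i L)\<^sup>2 * odds_slope (seller_odds theta i L))) (at L)"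
    unfolding total_share_def[abs_def] by (intro DERIV_add DERIV_exp DERIV_sum DERIV_comp_seller_odds DERIV_share)
  then show ?thesis unfolding total_share_deriv_def by (simp add: share_slope_eq seller_odds_pos)
qed

lemma DERIV_total_share_deriv:
  "(total_share_deriv theta T has_real_derivative total_share_deriv2 theta T L) (at L)"
  unfolding total_share_deriv_def[abs_def] total_share_deriv2_def
  by (intro DERIV_add DERIV_exp DERIV_sum DERIV_comp_seller_odds DERIV_share_slope)

text \<open>For \<open>x \<notin> T\<close>, \<open>extended_rebar theta T\<close> evaluated at the equilibrium of \<open>insert x T\<close>
  is \<open>rebar theta (insert x T)\<close>: the odds of \<open>x\<close> are \<open>1 / total_share theta T L - 1\<close>
  there.\<close>
definition extended_rebar :: "(nat \<Rightarrow> real) \<Rightarrow> nat set \<Rightarrow> real \<Rightarrow> real" where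
  "extended_rebar theta T L = odds_sum theta T L + 1 / total_share theta T L - 1"

definition extended_rebar_numer :: "(nat \<Rightarrow> real) \<Rightarrow> nat set \<Rightarrow> real \<Rightarrow> real" where
  "extended_rebar_numer theta T L =
     (total_share theta T L)\<^sup>2 * odds_sum_deriv theta T L - total_share_deriv theta T L"

definition extended_rebar_numer_deriv :: "(nat \<Rightarrow> real) \<Rightarrow> nat set \<Rightarrow> real \<Rightarrow> real" where
  "extended_rebar_numer_deriv theta T L =
     2 * total_share theta T L * total_share_deriv theta T L * odds_sum_deriv theta T L
     + (total_share theta T L)\<^sup>2 * odds_sum_deriv2 theta T L - total_share_deriv2 theta T L"

lemma DERIV_extended_rebar:
  "(extended_rebar theta T has_real_derivative
      extended_rebar_numer theta T L / (total_share theta T L)\<^sup>2) (at L)"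
proof -
  have B: "total_share theta T L \<noteq> 0" using total_share_pos[of theta T L] by simp
  have "(extended_rebar theta T has_real_derivative odds_sum_deriv theta T L
      + - (total_share_deriv theta T L * inverse ((total_share theta T L) ^ Suc (Suc 0))) - 0) (at L)"
    unfolding extended_rebar_def[abs_def] divide_inverse mult_1
    by (intro DERIV_diff DERIV_add DERIV_odds_sum DERIV_inverse_fun[OF DERIV_total_share B] DERIV_const)
  then show ?thesis
    unfolding extended_rebar_numer_def using B by (simp add: field_simps power2_eq_square)
qed

lemma DERIV_extended_rebar_numer:
  "(extended_rebar_numer theta T has_real_derivative extended_rebar_numer_deriv theta T L) (at L)"
  unfolding extended_rebar_numer_def[abs_def] extended_rebar_numer_deriv_def
  by (rule DERIV_cong[OF DERIV_diff[OF DERIV_mult[OF DERIV_power[OF DERIV_total_share]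
        DERIV_odds_sum_deriv] DERIV_total_share_deriv]]) (simp add: algebra_simps power2_eq_square)

lemma extended_rebar_insert:
  assumes T: "finite T" and x: "x \<notin> T" and L: "total_share theta (insert x T) L = 1"
  shows "extended_rebar theta T L = rebar theta (insert x T)"
proof -
  have "total_share theta T L = 1 / (1 + seller_odds theta x L)"
    using L total_share_insert[OF T x] one_minus_share[OF seller_odds_pos] by (metis add_diff_cancel_right')
  then show ?thesis
    using rebar_eq_sum_seller_odds[of "insert x T" theta L] T x L
    unfolding extended_rebar_def odds_sum_def by simp
qed

lemma extended_rebar_eq_rebar:
  "finite T \<Longrightarrow> T \<noteq> {} \<Longrightarrow> total_share theta T L = 1 \<Longrightarrow> extended_rebar theta T L = rebar theta T"
  unfolding extended_rebar_def odds_sum_def by (simp add: rebar_eq_sum_seller_odds)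

lemma cubic_pos_at_share:
  fixes r :: real assumes r: "0 < r"
  defines "s \<equiv> share r"
  shows "0 < 2 * s ^ 3 * ((1 + r) * (1 + r + r\<^sup>2)) - s\<^sup>2 * (r * (3 + 2 * r + r\<^sup>2)) + (2 + r)"
    (is "0 < ?Q")
proof -
  have sr: "s * (1 + r) = r" unfolding s_def share_def using r by simp
  have "?Q * (1 + r)\<^sup>2 = 2 * (s * (1 + r)) ^ 3 * (1 + r + r\<^sup>2)
      - (s * (1 + r))\<^sup>2 * (r * (3 + 2 * r + r\<^sup>2)) + (2 + r) * (1 + r)\<^sup>2"
    by (simp add: algebra_simps power2_eq_square power3_eq_cube)
  also have "\<dots> = r ^ 5 + 4 * r\<^sup>2 + 5 * r + 2"
    unfolding sr by (simp add: algebra_simps power2_eq_square power3_eq_cube eval_nat_numeral)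
  finally have "?Q * (1 + r)\<^sup>2 = r ^ 5 + 4 * r\<^sup>2 + 5 * r + 2" .
  moreover have "0 < r ^ 5 + 4 * r\<^sup>2 + 5 * r + 2" using r by (simp add: add_pos_nonneg)
  ultimately have "0 < ?Q * (1 + r)\<^sup>2" by simp
  moreover have "0 < (1 + r)\<^sup>2" using r by simp
  ultimately show ?thesis by (simp add: zero_less_mult_iff)
qed

text \<open>The cubic is increasing beyond \<open>share r\<close>: its difference quotient there factors into
  nonnegative terms because \<open>3 * a * s - b = r\<^sup>2 * (1 + 2 * r) \<ge> 0\<close>.\<close>
lemma cubic_pos:
  fixes r B :: real assumes r: "0 < r" and B: "share r \<le> B"
  shows "0 < 2 * B ^ 3 * ((1 + r) * (1 + r + r\<^sup>2)) - B\<^sup>2 * (r * (3 + 2 * r + r\<^sup>2)) + (2 + r)"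
proof -
  define a where "a = (1 + r) * (1 + r + r\<^sup>2)"
  define b where "b = r * (3 + 2 * r + r\<^sup>2)"
  define s where "s = share r"
  have s: "0 < s" "s \<le> B" unfolding s_def using r B by (simp_all add: share_pos)
  have a: "0 < a" unfolding a_def using r by (simp add: add_pos_nonneg)
  have "a * s = r * (1 + r + r\<^sup>2)" unfolding a_def s_def share_def using r by (simp add: field_simps)
  then have ab: "0 \<le> 3 * (a * s) - b" unfolding b_def using r by (simp add: algebra_simps power2_eq_square)
  have "0 \<le> a * ((B - s) * (2 * B + s)) + (3 * (a * s) - b) * (B + s)"
    using a s ab by (simp add: add_nonneg_nonneg)
  also have "\<dots> = 2 * a * (B\<^sup>2 + B * s + s\<^sup>2) - b * (B + s)"
    by (simp add: algebra_simps power2_eq_square)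
  finally have "0 \<le> (B - s) * (2 * a * (B\<^sup>2 + B * s + s\<^sup>2) - b * (B + s))"
    using s by simp
  also have "\<dots> = (2 * B ^ 3 * a - B\<^sup>2 * b + (2 + r)) - (2 * s ^ 3 * a - s\<^sup>2 * b + (2 + r))"
    by (simp add: algebra_simps power2_eq_square power3_eq_cube)
  finally show ?thesis using cubic_pos_at_share[OF r] unfolding a_def b_def s_def by linarith
qed

lemma numer_deriv_summand_pos:
  fixes r B :: real assumes r: "0 < r" and B: "share r \<le> B"
  shows "0 < 2 * B ^ 3 * (odds_slope r)\<^sup>2 + B\<^sup>2 * (odds_slope r * (odds_slope_deriv r - 1))
    + share_slope r - share_slope_deriv r * odds_slope r"
proof -
  have "0 < 1 + r + r\<^sup>2" using r by (simp add: add_pos_nonneg)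
  then have d: "1 + r + r\<^sup>2 \<noteq> 0" "1 + r \<noteq> 0" using r by simp_all
  have "2 * B ^ 3 * (odds_slope r)\<^sup>2 + B\<^sup>2 * (odds_slope r * (odds_slope_deriv r - 1))
      + share_slope r - share_slope_deriv r * odds_slope r
    = r\<^sup>2 * (1 + r) / (1 + r + r\<^sup>2) ^ 3
      * (2 * B ^ 3 * ((1 + r) * (1 + r + r\<^sup>2)) - B\<^sup>2 * (r * (3 + 2 * r + r\<^sup>2)) + (2 + r))"
    unfolding odds_slope_def odds_slope_deriv_def share_slope_def share_slope_deriv_def using d
    by (simp add: divide_simps) (simp add: algebra_simps power2_eq_square power3_eq_cube eval_nat_numeral)
  also have "0 < \<dots>"
    using r cubic_pos[OF r B] by (simp add: add_pos_nonneg)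
  finally show ?thesis .
qed

lemma sum_power2_le_power2_sum:
  fixes f :: "'a \<Rightarrow> real"
  assumes "finite T" "\<And>i. i \<in> T \<Longrightarrow> 0 \<le> f i"
  shows "(\<Sum>i\<in>T. (f i)\<^sup>2) \<le> (\<Sum>i\<in>T. f i)\<^sup>2"
proof -
  have "(\<Sum>i\<in>T. (f i)\<^sup>2) \<le> (\<Sum>i\<in>T. f i * (\<Sum>j\<in>T. f j))"
    unfolding power2_eq_square using assms by (intro sum_mono mult_left_mono member_le_sum) auto
  also have "\<dots> = (\<Sum>i\<in>T. f i)\<^sup>2" by (simp add: power2_eq_square sum_distrib_right)
  finally show ?thesis .
qed

lemma extended_rebar_numer_deriv_at_zero:
  assumes "extended_rebar_numer theta T L = 0"
  defines "B \<equiv> total_share theta T L" and "u \<equiv> \<lambda>i. seller_odds theta i L"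
  shows "extended_rebar_numer_deriv theta T L = 2 * B ^ 3 * (odds_sum_deriv theta T L)\<^sup>2
    + (\<Sum>i\<in>T. B\<^sup>2 * (odds_slope (u i) * (odds_slope_deriv (u i) - 1))
         + share_slope (u i) - share_slope_deriv (u i) * odds_slope (u i))"
proof -
  have Bd: "total_share_deriv theta T L = B\<^sup>2 * odds_sum_deriv theta T L"
    using assms(1) unfolding extended_rebar_numer_def B_def by simp
  then have "exp L = B\<^sup>2 * odds_sum_deriv theta T L - (\<Sum>i\<in>T. share_slope (u i))"
    unfolding total_share_deriv_def u_def by simp
  then show ?thesis
    unfolding extended_rebar_numer_deriv_def Bd B_def[symmetric] total_share_deriv2_def
      odds_sum_deriv2_def odds_sum_deriv_def
    by (simp add: u_def sum.distrib sum_subtractf sum_distrib_left algebra_simps power2_eq_square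
        power3_eq_cube)
qed

text \<open>After dropping the cross terms of \<open>(odds_sum_deriv theta T L)\<^sup>2\<close>, every seller
  contributes a positive term, since the total share bounds each seller's share.\<close>
lemma extended_rebar_numer_deriv_pos:
  assumes T: "finite T" "T \<noteq> {}" and zero: "extended_rebar_numer theta T L = 0"
  shows "0 < extended_rebar_numer_deriv theta T L"
proof -
  define B where "B = total_share theta T L"
  define u where "u = (\<lambda>i. seller_odds theta i L)"
  have B: "0 < B" unfolding B_def by (rule total_share_pos)
  have share_le_B: "share (u i) \<le> B" if "i \<in> T" for i
  proof -
    have "share (u i) \<le> (\<Sum>j\<in>T. share (u j))"
      using that T by (intro member_le_sum) (auto simp: u_def share_pos seller_odds_pos less_imp_le)
    then show ?thesis
      using exp_gt_zero[of L] unfolding B_def total_share_def u_def by linarith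
  qed
  have "2 * B ^ 3 * (\<Sum>i\<in>T. (odds_slope (u i))\<^sup>2) \<le> 2 * B ^ 3 * (odds_sum_deriv theta T L)\<^sup>2"
    using B T(1) unfolding odds_sum_deriv_def u_def
    by (intro mult_left_mono sum_power2_le_power2_sum)
       (auto simp: odds_slope_def seller_odds_pos less_imp_le)
  moreover have "0 < (\<Sum>i\<in>T. 2 * B ^ 3 * (odds_slope (u i))\<^sup>2
      + B\<^sup>2 * (odds_slope (u i) * (odds_slope_deriv (u i) - 1))
      + share_slope (u i) - share_slope_deriv (u i) * odds_slope (u i))"
    using T share_le_B by (intro sum_pos numer_deriv_summand_pos) (auto simp: u_def seller_odds_pos)
  ultimately show ?thesis
    unfolding extended_rebar_numer_deriv_at_zero[OF zero] B_def[symmetric]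
    by (simp add: u_def sum.distrib sum_subtractf sum_distrib_left algebra_simps)
qed

lemma DERIV_pos_at_zeros_imp_stays_pos:
  fixes f :: "real \<Rightarrow> real"
  assumes deriv: "\<And>t. (f has_real_derivative f' t) (at t)"
    and zeros: "\<And>t. f t = 0 \<Longrightarrow> 0 < f' t"
    and x: "0 < f x" and xy: "x \<le> y"
  shows "0 < f y"
proof (rule ccontr)
  assume "\<not> 0 < f y"
  have cont: "\<forall>t. a \<le> t \<and> t \<le> b \<longrightarrow> isCont f t" for a b
    by (simp add: DERIV_isCont[OF deriv])
  have zero_between: "\<exists>t\<ge>x. t \<le> b \<and> f t = 0" if "x \<le> b" "f b \<le> 0" for b
    using IVT2[of f b 0 x, OF that(2) _ that(1) cont] x by simp
  define Z where "Z = {x..y} \<inter> {t. f t = 0}"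
  have "closed {t. f t = 0}"
    using DERIV_isCont[OF deriv] by (intro closed_Collect_eq continuous_at_imp_continuous_on) auto
  then have "compact Z" unfolding Z_def by (intro compact_Int_closed compact_Icc)
  moreover have "Z \<noteq> {}"
    using zero_between[OF xy] \<open>\<not> 0 < f y\<close> unfolding Z_def by auto
  ultimately obtain z where z: "z \<in> Z" and z_min: "\<forall>t\<in>Z. z \<le> t"
    by (meson compact_attains_inf)
  have fz: "f z = 0" and "x \<le> z" using z unfolding Z_def by auto
  with x have xz: "x < z" by (cases "x = z") auto
  have pos: "0 < f t" if t: "x \<le> t" "t < z" for t
  proof (rule ccontr)
    assume "\<not> 0 < f t"
    then obtain t' where "x \<le> t'" "t' \<le> t" "f t' = 0" using zero_between[OF t(1)] by auto
    then have "t' \<in> Z" using t z unfolding Z_def by auto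
    with z_min have "z \<le> t'" by blast
    with \<open>t' \<le> t\<close> t(2) show False by simp
  qed
  obtain d where d: "0 < d" "\<And>h. 0 < h \<Longrightarrow> h < d \<Longrightarrow> f (z - h) < f z"
    using DERIV_pos_inc_left[OF deriv zeros[OF fz]] by blast
  define h where "h = min (d / 2) (z - x)"
  have "0 < h" "h < d" "x \<le> z - h" "z - h < z" unfolding h_def using d xz by auto
  then have "f (z - h) < 0" and "0 < f (z - h)" using d(2) fz pos by auto
  then show False by simp
qed

lemma DERIV_single_crossing_no_rise_before_fall:
  fixes F :: "real \<Rightarrow> real"
  assumes deriv: "\<And>t. (F has_real_derivative F' t) (at t)"
    and crossing: "\<And>s t. s \<le> t \<Longrightarrow> 0 < F' s \<Longrightarrow> 0 < F' t"
    and L: "L1 \<le> L2" "L2 < L0" and fall: "F L0 \<le> F L2"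
  shows "F L2 \<le> F L1"
proof (rule ccontr)
  assume rise: "\<not> F L2 \<le> F L1"
  with L have "L1 < L2" by (cases "L1 = L2") auto
  then obtain z where z: "L1 < z" "z < L2" "F L2 - F L1 = (L2 - L1) * F' z"
    using MVT2[of L1 L2 F F'] deriv by blast
  with rise have "0 < (L2 - L1) * F' z" by linarith
  with \<open>L1 < L2\<close> have "0 < F' z" by (simp add: zero_less_mult_iff)
  have "F L2 < F L0"
  proof (rule DERIV_pos_imp_increasing[OF L(2)])
    fix t assume "L2 \<le> t"
    then have "0 < F' t" using crossing[of z t] z \<open>0 < F' z\<close> by simp
    then show "\<exists>y. DERIV F t :> y \<and> 0 < y" using deriv by blast
  qed
  with fall show False by simp
qed

lemma extended_rebar_no_rise_before_fall:
  assumes T: "finite T" "T \<noteq> {}" and L: "L1 \<le> L2" "L2 < L0"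
    and fall: "extended_rebar theta T L0 \<le> extended_rebar theta T L2"
  shows "extended_rebar theta T L2 \<le> extended_rebar theta T L1"
proof (rule DERIV_single_crossing_no_rise_before_fall[OF DERIV_extended_rebar _ L fall])
  fix s t :: real
  assume "s \<le> t" and "0 < extended_rebar_numer theta T s / (total_share theta T s)\<^sup>2"
  then have "0 < extended_rebar_numer theta T t"
    using DERIV_pos_at_zeros_imp_stays_pos[OF DERIV_extended_rebar_numer
        extended_rebar_numer_deriv_pos[OF T]] total_share_pos[of theta T s]
    by (simp add: zero_less_divide_iff)
  then show "0 < extended_rebar_numer theta T t / (total_share theta T t)\<^sup>2"
    using total_share_pos[of theta T t] by simp
qed

text \<open>Let \<open>L0\<close>, \<open>Lj\<close>, \<open>Li\<close> be the equilibria of \<open>T\<close>, \<open>insert j T\<close>, \<open>insert i T\<close>.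
  Adding a seller lowers the equilibrium and a better seller lowers it further, so
  \<open>Li \<le> Lj < L0\<close>; then \<open>extended_rebar theta T\<close> compares all three revenues.\<close>
lemma rebar_exchange:
  assumes T: "finite T" "T \<noteq> {}" and j: "j \<notin> T" and i: "i \<notin> T"
    and better: "theta j \<le> theta i"
    and drop: "rebar theta T \<le> rebar theta (insert j T)"
  shows "rebar theta (insert j T) \<le> rebar theta (insert i T)"
proof -
  obtain L0 where L0: "total_share theta T L0 = 1" using total_share_eq_one[OF T(1)] by blast
  obtain Lj where Lj: "total_share theta (insert j T) Lj = 1"
    using total_share_eq_one[of "insert j T"] T by blast
  obtain Li where Li: "total_share theta (insert i T) Li = 1"
    using total_share_eq_one[of "insert i T"] T by blast
  have Lj_Li: "total_share theta T Lj + share (seller_odds theta j Lj)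
      = total_share theta T Li + share (seller_odds theta i Li)"
    using Lj Li total_share_insert[OF T(1) j] total_share_insert[OF T(1) i] by simp
  have Lj_L0: "Lj < L0"
  proof (rule ccontr)
    assume "\<not> Lj < L0"
    then have "total_share theta T L0 \<le> total_share theta T Lj" by (simp add: total_share_mono T)
    then show False
      using L0 Lj total_share_insert[OF T(1) j] share_pos[OF seller_odds_pos, of theta j Lj] by simp
  qed
  have Li_Lj: "Li \<le> Lj"
  proof (rule ccontr)
    assume "\<not> Li \<le> Lj"
    then have "total_share theta T Lj < total_share theta T Li"
      and "share (seller_odds theta j Lj) < share (seller_odds theta i Li)"
      using better by (auto intro!: total_share_strict_mono T share_strict_mono seller_odds_pos
          seller_odds_strict_mono)
    with Lj_Li show False by simp
  qed
  have "extended_rebar theta T Lj \<le> extended_rebar theta T Li"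
    using extended_rebar_no_rise_before_fall[where theta=theta, OF T Li_Lj Lj_L0] drop
      extended_rebar_eq_rebar[OF T L0] extended_rebar_insert[OF T(1) j Lj] by simp
  then show ?thesis
    using extended_rebar_insert[OF T(1) j Lj] extended_rebar_insert[OF T(1) i Li] by simp
qed

lemma is_rebar_max_exchange:
  assumes max: "is_rebar_max n theta S" and two: "2 \<le> card S"
    and j: "j \<in> S" and i: "i \<in> {1..n}" "i \<notin> S" and better: "theta j \<le> theta i"
  shows "is_rebar_max n theta (insert i (S - {j}))"
proof -
  have S: "S \<subseteq> {1..n}" "finite S" and best: "\<And>T. T \<subseteq> {1..n} \<Longrightarrow> T \<noteq> {} \<Longrightarrow> rebar theta T \<le> rebar theta S"
    using max finite_subset[of S "{1..n}"] unfolding is_rebar_max_def by auto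
  have "card (S - {j}) \<noteq> 0" using two j S(2) by simp
  then have T: "finite (S - {j})" "S - {j} \<noteq> {}" using S(2) by auto
  have "rebar theta (S - {j}) \<le> rebar theta S" using best[of "S - {j}"] S(1) T(2) by auto
  then have "rebar theta S \<le> rebar theta (insert i (S - {j}))"
    using rebar_exchange[OF T, of j i theta] insert_Diff[OF j] i better by simp
  then show ?thesis using max i S(1) best unfolding is_rebar_max_def by (auto intro: order_trans)
qed

lemma is_rebar_max_initial_segment:
  assumes mono: "\<And>i j. 1 \<le> i \<Longrightarrow> i \<le> j \<Longrightarrow> j \<le> n \<Longrightarrow> theta j \<le> theta i"
    and max: "is_rebar_max n theta S" and two: "2 \<le> card S"
  shows "is_rebar_max n theta {1..card S}"
  using max two
proof (induction "card (S - {1..card S})" arbitrary: S rule: less_induct)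
  case less
  define k where "k = card S"
  have S: "S \<subseteq> {1..n}" using less.prems(1) unfolding is_rebar_max_def by blast
  then have "finite S" using finite_subset[OF S] by simp
  show ?case
  proof (cases "S = {1..k}")
    case True
    then show ?thesis using less.prems(1) unfolding k_def by simp
  next
    case False
    have "\<not> S \<subseteq> {1..k}"
    proof
      assume "S \<subseteq> {1..k}"
      then show False using False card_subset_eq[of "{1..k}" S] unfolding k_def by simp
    qed
    then obtain j where j: "j \<in> S" "j \<notin> {1..k}" by blast
    have "\<not> {1..k} \<subseteq> S"
    proof
      assume "{1..k} \<subseteq> S"
      then show False using False card_subset_eq[OF \<open>finite S\<close>, of "{1..k}"] unfolding k_def by simp
    qed
    then obtain i where i: "i \<in> {1..k}" "i \<notin> S" by blast
    have "k \<le> n" using card_mono[OF _ S] k_def by simp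
    with i j S have "i \<in> {1..n}" "i \<le> j" "j \<le> n" by auto
    then have "theta j \<le> theta i" using mono[of i j] i(1) by simp
    with \<open>i \<in> {1..n}\<close> have max': "is_rebar_max n theta (insert i (S - {j}))"
      using is_rebar_max_exchange[OF less.prems j(1) _ i(2)] by blast
    have card': "card (insert i (S - {j})) = k"
      unfolding k_def using \<open>finite S\<close> i(2) j(1) less.prems(2) by simp
    have "insert i (S - {j}) - {1..k} = (S - {1..k}) - {j}" using i j by auto
    moreover have "card ((S - {1..k}) - {j}) < card (S - {1..k})"
      by (rule card_Diff1_less) (use \<open>finite S\<close> j in auto)
    ultimately have "card (insert i (S - {j}) - {1..k}) < card (S - {1..k})" by simp
    then show ?thesis using less.hyps[OF _ max'] card' less.prems(2) unfolding k_def by simp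
  qed
qed

theorem theorem9:
  fixes n :: nat and theta :: "nat \<Rightarrow> real" and S :: "nat set"
  assumes mono: "\<And>i j. 1 \<le> i \<Longrightarrow> i \<le> j \<Longrightarrow> j \<le> n \<Longrightarrow> theta j \<le> theta i"
    and nonneg: "\<And>i. 1 \<le> i \<Longrightarrow> i \<le> n \<Longrightarrow> 0 \<le> theta i"
    and Smax: "is_rebar_max n theta S"
    and card3: "card S \<ge> 3"
  shows "is_rebar_max n theta {1..card S}"
  using is_rebar_max_initial_segment[OF mono Smax] card3 by simp

end
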